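(* Let $d$ be a positive integer and let $(A_{R,n})_{R,n\in\mathbb{N}}$ be a two-parameter sequence in a normed space with $\|A_{R,n}\|\le1$ for all $R,n$. Let $L\in\mathcal{H}$ be eventually positive with $1\prec L(t)\prec t$, and assume that for some $C>0$, $$\limsup_{R\to+\infty}\mathop{\mathbb{E}}_{1\le r\le R}\Big\|\mathop{\mathbb{E}}_{r\le n\le r+L(r)}A_{R,n}\Big\|^d\le C.$$ Then $\limsup_{R\to+\infty}\big\|\mathop{\mathbb{E}}_{1\le n\le R}A_{R,n}\big\|\le C^{1/d}$.
   Context: $\mathcal{H}$ is a fixed Hardy field (subfield of germs at $+\infty$ of real functions, closed under differentiation) containing the logarithmico-exponential functions, closed under composition and compositional inversion. $f\prec g$ means $f(t)/g(t)\to0$. $\mathbb{E}_{1\le n\le x}a(n)=\frac{1}{\lfloor x\rfloor}\sum_{n=1}^{\lfloor x\rfloor}a(n)$, and $\mathbb{E}_{r\le n\le r+L(r)}$ denotes the average over the integers $n$ in $[r,r+L(r)]$. *)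

theory Defs
  imports "HOL-Analysis.Analysis"
begin

(* Germs at +infinity are represented by functions real => real; equality of germs
   is eventual equality at_top. *)

definition hardy_field :: "(real \<Rightarrow> real) set \<Rightarrow> bool" where
  "hardy_field F \<longleftrightarrow>
     (\<forall>c. (\<lambda>_. c) \<in> F) \<and>
     (\<forall>f\<in>F. \<forall>g\<in>F. \<exists>h\<in>F. eventually (\<lambda>x. h x = f x + g x) at_top) \<and>
     (\<forall>f\<in>F. \<forall>g\<in>F. \<exists>h\<in>F. eventually (\<lambda>x. h x = f x * g x) at_top) \<and>
     (\<forall>f\<in>F. \<exists>h\<in>F. eventually (\<lambda>x. h x = - f x) at_top) \<and>
     (\<forall>f\<in>F. \<not> eventually (\<lambda>x. f x = 0) at_top \<longrightarrow>
        (\<exists>h\<in>F. eventually (\<lambda>x. f x * h x = 1) at_top)) \<and>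
     (\<forall>f\<in>F. eventually (\<lambda>x. f differentiable at x) at_top \<and>
        (\<exists>h\<in>F. eventually (\<lambda>x. deriv f x = h x) at_top))"

definition standing_hardy_field :: "(real \<Rightarrow> real) set \<Rightarrow> bool" where
  "standing_hardy_field H \<longleftrightarrow>
     hardy_field H \<and>
     (\<lambda>x. x) \<in> H \<and>
     (\<forall>f\<in>H. \<exists>h\<in>H. eventually (\<lambda>x. h x = exp (f x)) at_top) \<and>
     (\<forall>f\<in>H. eventually (\<lambda>x. f x > 0) at_top \<longrightarrow>
        (\<exists>h\<in>H. eventually (\<lambda>x. h x = ln (f x)) at_top)) \<and>
     (\<forall>f\<in>H. \<forall>g\<in>H. filterlim g at_top at_top \<longrightarrow>
        (\<exists>h\<in>H. eventually (\<lambda>x. h x = f (g x)) at_top)) \<and>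
     (\<forall>f\<in>H. filterlim f at_top at_top \<longrightarrow>
        (\<exists>g\<in>H. filterlim g at_top at_top \<and> eventually (\<lambda>x. f (g x) = x) at_top))"

definition avg_upto :: "nat \<Rightarrow> (nat \<Rightarrow> 'a::real_normed_vector) \<Rightarrow> 'a" where
  "avg_upto R a = (1 / real R) *\<^sub>R (\<Sum>n=1..R. a n)"

definition short_avg :: "(real \<Rightarrow> real) \<Rightarrow> nat \<Rightarrow> (nat \<Rightarrow> 'a::real_normed_vector) \<Rightarrow> 'a" where
  "short_avg L r a =
     (let S = {n::nat. real r \<le> real n \<and> real n \<le> real r + L (real r)}
      in (1 / real (card S)) *\<^sub>R (\<Sum>n\<in>S. a n))"

end

(* Summing the short averages over r <= R gives the term A R n the weight
   sum 1 / |W r| over the windows W r = [r, r + L r] that contain n.  For L in a Hardy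
   field with 1 = o(L t) and L t = o(t), the derivative L' eventually decreases to 0, so
   every window starting within about L n of n contains n and has about L n elements; hence
   the weight of n is close to 1 for all but o(R) of the n <= R.  As the total weight is at
   most R, the long average is, up to o(1), the mean of the short averages, and Jensen's
   inequality for t ^ d bounds that mean by the d-th root of the mean of their d-th powers. *)

theory Submission
  imports Defs
begin

lemma mono_on_atLeast_if_deriv_nonneg:
  fixes f f' :: "real \<Rightarrow> real"
  assumes "\<And>x. x \<ge> a \<Longrightarrow> (f has_real_derivative f' x) (at x)"
    and "\<And>x. x \<ge> a \<Longrightarrow> f' x \<ge> 0"
  shows "mono_on {a..} f"
proof (rule monotone_onI)
  fix x y assume "x \<in> {a..}" "y \<in> {a..}" "x \<le> y"
  show "f x \<le> f y"
  proof (rule DERIV_nonneg_imp_nondecreasing[OF \<open>x \<le> y\<close>])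
    fix z assume "x \<le> z"
    with \<open>x \<in> {a..}\<close> show "\<exists>D. (f has_real_derivative D) (at z) \<and> D \<ge> 0"
      by (intro exI[of _ "f' z"] conjI assms) auto
  qed
qed

lemma antimono_on_atLeast_if_deriv_nonpos:
  fixes f f' :: "real \<Rightarrow> real"
  assumes "\<And>x. x \<ge> a \<Longrightarrow> (f has_real_derivative f' x) (at x)"
    and "\<And>x. x \<ge> a \<Longrightarrow> f' x \<le> 0"
  shows "antimono_on {a..} f"
proof (rule monotone_onI)
  fix x y assume "x \<in> {a..}" "y \<in> {a..}" "x \<le> y"
  show "f y \<le> f x"
  proof (rule DERIV_nonpos_imp_nonincreasing[OF \<open>x \<le> y\<close>])
    fix z assume "x \<le> z"
    with \<open>x \<in> {a..}\<close> show "\<exists>D. (f has_real_derivative D) (at z) \<and> D \<le> 0"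
      by (intro exI[of _ "f' z"] conjI assms) auto
  qed
qed

lemma Limsup_le_if_eventually_le:
  fixes f :: "'a \<Rightarrow> real"
  assumes "\<And>e. e > 0 \<Longrightarrow> eventually (\<lambda>x. f x \<le> c + e) F"
  shows "Limsup F (\<lambda>x. ereal (f x)) \<le> ereal c"
proof (rule ereal_le_epsilon2)
  fix e :: real assume "e > 0"
  have "Limsup F (\<lambda>x. ereal (f x)) \<le> ereal (c + e)"
    using assms[OF \<open>e > 0\<close>] by (intro Limsup_bounded) (auto elim: eventually_mono)
  then show "Limsup F (\<lambda>x. ereal (f x)) \<le> ereal c + ereal e"
    by simp
qed

lemma power_of_mean_le_mean_of_power:
  fixes x :: "'i \<Rightarrow> real"
  assumes "finite I" and "I \<noteq> {}" and "\<And>i. i \<in> I \<Longrightarrow> x i \<ge> 0"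
  shows "((1 / real (card I)) * (\<Sum>i\<in>I. x i)) ^ d \<le> (1 / real (card I)) * (\<Sum>i\<in>I. x i ^ d)"
proof -
  have "convex_on {0..} (\<lambda>t::real. t ^ d)"
    by (cases "even d") (auto intro: convex_power_odd convex_on_subset[OF convex_power_even])
  then have "(\<Sum>i\<in>I. (1 / real (card I)) *\<^sub>R x i) ^ d \<le> (\<Sum>i\<in>I. (1 / real (card I)) * x i ^ d)"
    using assms by (intro convex_on_sum[where f = "\<lambda>t. t ^ d"]) (auto simp: card_gt_0_iff)
  then show ?thesis
    by (simp add: sum_distrib_left)
qed

lemma limsup_mean_le_root_limsup_mean_power:
  fixes x :: "nat \<Rightarrow> nat \<Rightarrow> real"
  assumes x: "\<And>R r. x R r \<ge> 0" and d: "d > 0" and C: "C > 0"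
    and hyp: "limsup (\<lambda>R. ereal ((1 / real R) * (\<Sum>r=1..R. x R r ^ d))) \<le> ereal C"
  shows "limsup (\<lambda>R. ereal ((1 / real R) * (\<Sum>r=1..R. x R r))) \<le> ereal (C powr (1 / real d))"
proof -
  define c where "c = C powr (1 / real d)"
  have c_pos: "c > 0"
    using C by (simp add: c_def)
  have "c ^ d = C powr (1 / real d * real d)"
    using c_pos by (simp add: c_def powr_realpow[symmetric] powr_powr)
  also have "\<dots> = C"
    using C d by simp
  finally have c_pow: "c ^ d = C" .
  show ?thesis
    unfolding c_def[symmetric]
  proof (rule Limsup_le_if_eventually_le)
    fix e :: real assume e: "e > 0"
    have "c ^ d < (c + e) ^ d"
      using c_pos e d by (intro power_strict_mono) auto
    then have "ereal C < ereal ((c + e) ^ d)"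
      by (simp add: c_pow)
    with hyp have "limsup (\<lambda>R. ereal ((1 / real R) * (\<Sum>r=1..R. x R r ^ d))) < ereal ((c + e) ^ d)"
      by (rule le_less_trans)
    from Limsup_lessD[OF this]
    have "eventually (\<lambda>R. (1 / real R) * (\<Sum>r=1..R. x R r ^ d) < (c + e) ^ d) sequentially"
      by simp
    then show "eventually (\<lambda>R. (1 / real R) * (\<Sum>r=1..R. x R r) \<le> c + e) sequentially"
      using eventually_ge_at_top[of 1]
    proof eventually_elim
      case (elim R)
      have "((1 / real R) * (\<Sum>r=1..R. x R r)) ^ d \<le> (1 / real R) * (\<Sum>r=1..R. x R r ^ d)"
        using power_of_mean_le_mean_of_power[of "{1..R}" "x R" d] x \<open>R \<ge> 1\<close> by simp
      also have "\<dots> < (c + e) ^ d"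
        by (fact elim(1))
      finally have "(1 / real R) * (\<Sum>r=1..R. x R r) < c + e"
        by (rule power_less_imp_less_base) (use c_pos e in linarith)
      then show ?case by simp
    qed
  qed
qed

lemma hardy_field_has_real_derivative:
  assumes "hardy_field H" and "f \<in> H"
  obtains f' where "f' \<in> H" and "eventually (\<lambda>x. (f has_real_derivative f' x) (at x)) at_top"
proof -
  from assms obtain f' where "f' \<in> H"
    and diff: "eventually (\<lambda>x. f differentiable at x) at_top"
    and deriv: "eventually (\<lambda>x. deriv f x = f' x) at_top"
    unfolding hardy_field_def by blast
  from diff deriv have "eventually (\<lambda>x. (f has_real_derivative f' x) (at x)) at_top"
    by eventually_elim (metis DERIV_deriv_iff_real_differentiable)
  with \<open>f' \<in> H\<close> show ?thesis by (rule that)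
qed

text \<open>A nonzero element of a Hardy field is invertible, hence eventually nonzero; being
  eventually continuous, it cannot change sign beyond that point.\<close>
lemma hardy_field_eventually_sign:
  assumes H: "hardy_field H" and f: "f \<in> H"
  shows "eventually (\<lambda>x. f x \<ge> 0) at_top \<or> eventually (\<lambda>x. f x \<le> 0) at_top"
proof (cases "eventually (\<lambda>x. f x = 0) at_top")
  case True
  then show ?thesis by (auto elim: eventually_mono)
next
  case False
  with assms obtain g where "eventually (\<lambda>x. f x * g x = 1) at_top"
    unfolding hardy_field_def by blast
  moreover obtain f' where "eventually (\<lambda>x. (f has_real_derivative f' x) (at x)) at_top"
    using hardy_field_has_real_derivative[OF H f] .
  ultimately have "eventually (\<lambda>x. f x \<noteq> 0 \<and> isCont f x) at_top"
    by eventually_elim (auto intro: DERIV_isCont)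
  then obtain T where T: "\<And>x. x \<ge> T \<Longrightarrow> f x \<noteq> 0 \<and> isCont f x"
    unfolding eventually_at_top_linorder by blast
  have conn: "connected (f ` {T..})"
    using T by (intro connected_continuous_image continuous_at_imp_continuous_on) auto
  have "(\<forall>x\<ge>T. f x \<ge> 0) \<or> (\<forall>x\<ge>T. f x \<le> 0)"
  proof (rule ccontr)
    assume "\<not> ?thesis"
    then obtain a b where "a \<ge> T" "f a < 0" "b \<ge> T" "f b > 0"
      by (auto simp: not_le)
    then have "0 \<in> f ` {T..}"
      using connectedD_interval[OF conn, of "f a" "f b" 0] by auto
    with T show False by auto
  qed
  then show ?thesis
    unfolding eventually_at_top_linorder by blast
qed

lemma hardy_field_eventually_monotone:
  assumes H: "hardy_field H" and f: "f \<in> H"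
  shows "\<exists>T. mono_on {T..} f \<or> antimono_on {T..} f"
proof -
  obtain f' where f': "f' \<in> H" and "eventually (\<lambda>x. (f has_real_derivative f' x) (at x)) at_top"
    using hardy_field_has_real_derivative[OF H f] .
  moreover note hardy_field_eventually_sign[OF H f']
  ultimately have "eventually (\<lambda>x. (f has_real_derivative f' x) (at x) \<and> f' x \<ge> 0) at_top \<or>
      eventually (\<lambda>x. (f has_real_derivative f' x) (at x) \<and> f' x \<le> 0) at_top"
    by (auto intro: eventually_conj)
  then obtain T where
    "(\<forall>x\<ge>T. (f has_real_derivative f' x) (at x) \<and> f' x \<ge> 0) \<or>
     (\<forall>x\<ge>T. (f has_real_derivative f' x) (at x) \<and> f' x \<le> 0)"
    unfolding eventually_at_top_linorder by blast
  then have "mono_on {T..} f \<or> antimono_on {T..} f"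
    using mono_on_atLeast_if_deriv_nonneg[of T f f'] antimono_on_atLeast_if_deriv_nonpos[of T f f']
    by blast
  then show ?thesis ..
qed

lemma deriv_pos_somewhere_if_filterlim_at_top:
  fixes L h :: "real \<Rightarrow> real"
  assumes deriv: "\<And>x. x \<ge> T \<Longrightarrow> (L has_real_derivative h x) (at x)"
    and L_top: "filterlim L at_top at_top" and x: "x \<ge> T"
  shows "\<exists>t\<ge>x. h t > 0"
proof (rule ccontr)
  assume "\<not> ?thesis"
  then have "antimono_on {x..} L"
    using x deriv by (intro antimono_on_atLeast_if_deriv_nonpos[of x L h]) (auto simp: not_less)
  moreover have "eventually (\<lambda>t. L t > L x \<and> t \<ge> x) at_top"
    using L_top by (intro eventually_conj eventually_ge_at_top) (simp add: filterlim_at_top_dense)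
  then obtain t where "L t > L x" "t \<ge> x"
    unfolding eventually_at_top_linorder by blast
  ultimately show False by (auto dest: monotone_onD[of _ _ _ _ x t])
qed

lemma deriv_small_somewhere_if_sublinear:
  fixes L h :: "real \<Rightarrow> real"
  assumes deriv: "\<And>x. x \<ge> T \<Longrightarrow> (L has_real_derivative h x) (at x)"
    and L_sub: "((\<lambda>t. L t / t) \<longlongrightarrow> 0) at_top" and x: "x \<ge> T" and c: "c > 0"
  shows "\<exists>t\<ge>x. h t < c"
proof (rule ccontr)
  assume "\<not> ?thesis"
  then have "mono_on {x..} (\<lambda>t. L t - c * t)"
    using x deriv
    by (intro mono_on_atLeast_if_deriv_nonneg[of x _ "\<lambda>t. h t - c"])
      (auto intro!: derivative_eq_intros simp: not_less)
  then have lin: "L x - c * x + c * t \<le> L t" if "t \<ge> x" for t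
    using that by (auto dest: monotone_onD[of _ _ _ _ x t])
  have "eventually (\<lambda>t. L t / t < c / 2) at_top"
    using L_sub c by (intro order_tendstoD) auto
  moreover have "eventually (\<lambda>t. t \<ge> max x 1 \<and> t > 2 * \<bar>L x - c * x\<bar> / c) at_top"
    by (intro eventually_conj eventually_ge_at_top eventually_gt_at_top)
  ultimately have "eventually (\<lambda>t. L t / t < c / 2 \<and> t \<ge> max x 1 \<and> t > 2 * \<bar>L x - c * x\<bar> / c) at_top"
    by (rule eventually_conj)
  then obtain t where t: "L t / t < c / 2" "t \<ge> max x 1" "t > 2 * \<bar>L x - c * x\<bar> / c"
    unfolding eventually_at_top_linorder by blast
  then have "L t < c * t / 2" "\<bar>L x - c * x\<bar> < c * t / 2"
    using c by (auto simp: field_simps)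
  with lin[of t] t(2) show False by linarith
qed

lemma sublinear_deriv_nonneg_tendsto_0:
  fixes L h :: "real \<Rightarrow> real"
  assumes deriv: "\<And>x. x \<ge> T \<Longrightarrow> (L has_real_derivative h x) (at x)"
    and h_mono: "mono_on {T..} h \<or> antimono_on {T..} h"
    and L_top: "filterlim L at_top at_top"
    and L_sub: "((\<lambda>t. L t / t) \<longlongrightarrow> 0) at_top"
  shows "\<forall>x\<ge>T. h x \<ge> 0" and "(h \<longlongrightarrow> 0) at_top"
proof -
  note pos = deriv_pos_somewhere_if_filterlim_at_top[OF deriv L_top]
  note small = deriv_small_somewhere_if_sublinear[OF deriv L_sub]
  have anti: "antimono_on {T..} h"
    using h_mono
  proof
    assume mono: "mono_on {T..} h"
    obtain t where t: "t \<ge> T" "h t > 0" using pos[where x = T] by auto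
    then obtain s where "s \<ge> t" "h s < h t" using small[where x = t and c = "h t"] by auto
    with mono t show ?thesis by (auto dest: monotone_onD[of _ _ _ _ t s])
  qed
  show nonneg: "\<forall>x\<ge>T. h x \<ge> 0"
  proof (intro allI impI)
    fix x assume x: "x \<ge> T"
    then obtain t where "t \<ge> x" "h t > 0" using pos by blast
    with anti x show "h x \<ge> 0" by (auto dest: monotone_onD[of _ _ _ _ x t])
  qed
  show "(h \<longlongrightarrow> 0) at_top"
  proof (rule order_tendstoI)
    fix a :: real assume "a < 0"
    with nonneg show "eventually (\<lambda>x. a < h x) at_top"
      unfolding eventually_at_top_linorder by force
  next
    fix a :: real assume "a > 0"
    then obtain t where t: "t \<ge> T" "h t < a" using small[where x = T and c = a] by auto
    have "h x < a" if "x \<ge> t" for x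
      using anti t that by (auto dest: monotone_onD[of _ _ _ _ t x])
    then show "eventually (\<lambda>x. h x < a) at_top"
      unfolding eventually_at_top_linorder by blast
  qed
qed

definition slowly_increasing :: "(real \<Rightarrow> real) \<Rightarrow> bool" where
  "slowly_increasing L \<longleftrightarrow>
     (\<forall>e>0. \<exists>T. \<forall>r n. T \<le> r \<longrightarrow> r \<le> n \<longrightarrow> L r \<le> L n \<and> L n - L r \<le> e * (n - r))"

lemma hardy_sublinear_slowly_increasing:
  assumes H: "hardy_field H" and L_in: "L \<in> H"
    and L_top: "filterlim L at_top at_top"
    and L_sub: "((\<lambda>t. L t / t) \<longlongrightarrow> 0) at_top"
  shows "slowly_increasing L"
  unfolding slowly_increasing_def
proof (intro allI impI)
  fix e :: real assume e: "e > 0"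
  obtain h where h: "h \<in> H" and "eventually (\<lambda>x. (L has_real_derivative h x) (at x)) at_top"
    using hardy_field_has_real_derivative[OF H L_in] .
  then obtain T0 where T0: "\<And>x. x \<ge> T0 \<Longrightarrow> (L has_real_derivative h x) (at x)"
    unfolding eventually_at_top_linorder by blast
  obtain T1 where "mono_on {T1..} h \<or> antimono_on {T1..} h"
    using hardy_field_eventually_monotone[OF H h] by blast
  then have "mono_on {max T0 T1..} h \<or> antimono_on {max T0 T1..} h"
    by (meson atLeast_subset_iff max.cobounded2 monotone_on_subset)
  with T0 have nonneg: "\<forall>x\<ge>max T0 T1. h x \<ge> 0" and "(h \<longlongrightarrow> 0) at_top"
    using sublinear_deriv_nonneg_tendsto_0[of "max T0 T1" L h] L_top L_sub by auto
  then have "eventually (\<lambda>x. h x < e) at_top"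
    using e by (intro order_tendstoD)
  then obtain T2 where T2: "\<And>x. x \<ge> T2 \<Longrightarrow> h x < e"
    unfolding eventually_at_top_linorder by blast
  define T where "T = max (max T0 T1) T2"
  have "mono_on {T..} L"
    using T0 nonneg unfolding T_def by (intro mono_on_atLeast_if_deriv_nonneg[of _ L h]) auto
  moreover have "mono_on {T..} (\<lambda>t. e * t - L t)"
    using T0 T2 unfolding T_def
    by (intro mono_on_atLeast_if_deriv_nonneg[of _ _ "\<lambda>t. e - h t"])
      (auto intro!: derivative_eq_intros less_imp_le)
  ultimately have "L r \<le> L n \<and> e * r - L r \<le> e * n - L n" if "T \<le> r" "r \<le> n" for r n
    using that by (auto dest!: monotone_onD[of _ _ _ _ r n])
  then show "\<exists>T. \<forall>r n. T \<le> r \<longrightarrow> r \<le> n \<longrightarrow> L r \<le> L n \<and> L n - L r \<le> e * (n - r)"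
    by (intro exI[of _ T]) (auto simp: algebra_simps)
qed

definition window :: "(real \<Rightarrow> real) \<Rightarrow> nat \<Rightarrow> nat set" where
  "window L r = {n. real r \<le> real n \<and> real n \<le> real r + L (real r)}"

definition window_coverage :: "(real \<Rightarrow> real) \<Rightarrow> nat \<Rightarrow> nat \<Rightarrow> real" where
  "window_coverage L R n =
     (\<Sum>r=1..R. if n \<in> window L r then 1 / real (card (window L r)) else 0)"

lemma short_avg_eq_window:
  "short_avg L r a = (1 / real (card (window L r))) *\<^sub>R (\<Sum>n\<in>window L r. a n)"
  by (simp add: short_avg_def window_def Let_def)

lemma finite_window: "finite (window L r)"
  unfolding finite_nat_set_iff_bounded_le
proof (intro exI ballI)
  fix n assume "n \<in> window L r"
  then have "real n \<le> real (nat \<lceil>real r + L (real r)\<rceil>)"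
    unfolding window_def using real_nat_ceiling_ge order_trans by blast
  then show "n \<le> nat \<lceil>real r + L (real r)\<rceil>" by simp
qed

lemma card_window_le:
  assumes "L (real r) \<ge> 0"
  shows "real (card (window L r)) \<le> L (real r) + 1"
proof -
  have "window L r \<subseteq> {r..r + nat \<lfloor>L (real r)\<rfloor>}"
  proof
    fix n assume n: "n \<in> window L r"
    then have "int n - int r \<le> \<lfloor>L (real r)\<rfloor>"
      by (simp add: window_def le_floor_iff)
    with n show "n \<in> {r..r + nat \<lfloor>L (real r)\<rfloor>}"
      by (auto simp: window_def)
  qed
  then have "card (window L r) \<le> nat \<lfloor>L (real r)\<rfloor> + 1"
    using card_mono[of "{r..r + nat \<lfloor>L (real r)\<rfloor>}"] by fastforce
  then show ?thesis
    using assms by linarith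
qed

lemma window_coverage_nonneg: "window_coverage L R n \<ge> 0"
  unfolding window_coverage_def by (intro sum_nonneg) auto

lemma sum_short_avg_eq_weighted_sum:
  assumes V: "finite V" and windows: "(\<Union>r\<in>{1..R}. window L r) \<subseteq> V"
  shows "(\<Sum>r=1..R. short_avg L r a) = (\<Sum>n\<in>V. window_coverage L R n *\<^sub>R a n)"
proof -
  have "short_avg L r a =
      (\<Sum>n\<in>V. (if n \<in> window L r then 1 / real (card (window L r)) else 0) *\<^sub>R a n)"
    if "r \<in> {1..R}" for r
  proof -
    have "window L r \<subseteq> V" using that windows by blast
    then show ?thesis
      unfolding short_avg_eq_window scaleR_sum_right
      by (intro sum.mono_neutral_cong_left[OF V]) auto
  qed
  then have "(\<Sum>r=1..R. short_avg L r a) =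
      (\<Sum>r=1..R. \<Sum>n\<in>V. (if n \<in> window L r then 1 / real (card (window L r)) else 0) *\<^sub>R a n)"
    by (rule sum.cong[OF refl])
  also have "\<dots> = (\<Sum>n\<in>V. window_coverage L R n *\<^sub>R a n)"
    unfolding window_coverage_def scaleR_sum_left by (rule sum.swap)
  finally show ?thesis .
qed

lemma sum_window_coverage_le:
  assumes V: "finite V" and windows: "(\<Union>r\<in>{1..R}. window L r) \<subseteq> V"
  shows "(\<Sum>n\<in>V. window_coverage L R n) \<le> real R"
proof -
  have "(\<Sum>n\<in>V. window_coverage L R n) =
      (\<Sum>r=1..R. \<Sum>n\<in>V. if n \<in> window L r then 1 / real (card (window L r)) else 0)"
    unfolding window_coverage_def by (rule sum.swap)
  also have "\<dots> \<le> (\<Sum>r=1..R. 1)"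
  proof (rule sum_mono)
    fix r assume "r \<in> {1..R}"
    with windows have "window L r \<subseteq> V" by blast
    then have "(\<Sum>n\<in>V. if n \<in> window L r then 1 / real (card (window L r)) else 0) =
        (\<Sum>n\<in>window L r. 1 / real (card (window L r)))"
      by (intro sum.mono_neutral_cong_right[OF V]) auto
    also have "\<dots> \<le> 1" by simp
    finally show "(\<Sum>n\<in>V. if n \<in> window L r then 1 / real (card (window L r)) else 0) \<le> 1" .
  qed
  finally show ?thesis by simp
qed

text \<open>Writing \<open>\<bar>1 - c\<bar> = (c - 1) + 2 max (1 - c) 0\<close>, the total mass condition makes the
  excess weight \<open>c - 1\<close> cost no more than the missing weight.\<close>
lemma norm_sum_diff_weighted_sum_le:
  fixes a :: "'i \<Rightarrow> 'a::real_normed_vector" and c :: "'i \<Rightarrow> real"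
  assumes V: "finite V" and I: "I \<subseteq> V"
    and c_nonneg: "\<And>n. c n \<ge> 0" and c_mass: "(\<Sum>n\<in>V. c n) \<le> real (card I)"
    and a: "\<And>n. norm (a n) \<le> 1"
  shows "norm ((\<Sum>n\<in>I. a n) - (\<Sum>n\<in>V. c n *\<^sub>R a n)) \<le> 2 * (\<Sum>n\<in>I. max (1 - c n) 0)"
proof -
  define e where "e n = (if n \<in> I then 1 else 0 :: real)" for n
  have "(\<Sum>n\<in>I. a n) = (\<Sum>n\<in>V. e n *\<^sub>R a n)"
    unfolding e_def by (rule sum.mono_neutral_cong_left[OF V I]) auto
  then have "norm ((\<Sum>n\<in>I. a n) - (\<Sum>n\<in>V. c n *\<^sub>R a n)) = norm (\<Sum>n\<in>V. (e n - c n) *\<^sub>R a n)"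
    by (simp add: sum_subtractf scaleR_diff_left)
  also have "\<dots> \<le> (\<Sum>n\<in>V. \<bar>e n - c n\<bar>)"
    using a by (intro sum_norm_le) (simp add: mult_left_le)
  also have "\<dots> = (\<Sum>n\<in>V. (c n - e n) + 2 * max (e n - c n) 0)"
    by (rule sum.cong) (auto simp: abs_if max_def)
  also have "\<dots> = (\<Sum>n\<in>V. c n) - (\<Sum>n\<in>V. e n) + 2 * (\<Sum>n\<in>V. max (e n - c n) 0)"
    by (simp add: sum.distrib sum_subtractf sum_distrib_left)
  also have "(\<Sum>n\<in>V. e n) = real (card I)"
    unfolding e_def using V I by (simp add: sum.If_cases Int_absorb1)
  also have "(\<Sum>n\<in>V. max (e n - c n) 0) = (\<Sum>n\<in>I. max (1 - c n) 0)"
    unfolding e_def using c_nonneg by (intro sum.mono_neutral_cong_right[OF V I]) auto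
  finally show ?thesis
    using c_mass by simp
qed

lemma norm_sum_le_sum_short_avgs:
  fixes a :: "nat \<Rightarrow> 'a::real_normed_vector"
  assumes a: "\<And>n. norm (a n) \<le> 1"
  shows "norm (\<Sum>n=1..R. a n) \<le>
    (\<Sum>r=1..R. norm (short_avg L r a)) + 2 * (\<Sum>n=1..R. max (1 - window_coverage L R n) 0)"
proof -
  define V where "V = {1..R} \<union> (\<Union>r\<in>{1..R}. window L r)"
  have V: "finite V" and windows: "(\<Union>r\<in>{1..R}. window L r) \<subseteq> V"
    unfolding V_def by (auto simp: finite_window)
  have "norm (\<Sum>n=1..R. a n) \<le>
      norm (\<Sum>r=1..R. short_avg L r a) + norm ((\<Sum>n=1..R. a n) - (\<Sum>r=1..R. short_avg L r a))"
    by (rule norm_triangle_sub)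
  also have "norm (\<Sum>r=1..R. short_avg L r a) \<le> (\<Sum>r=1..R. norm (short_avg L r a))"
    by (rule norm_sum)
  also have "norm ((\<Sum>n=1..R. a n) - (\<Sum>r=1..R. short_avg L r a)) \<le>
      2 * (\<Sum>n=1..R. max (1 - window_coverage L R n) 0)"
    unfolding sum_short_avg_eq_weighted_sum[OF V windows]
    using sum_window_coverage_le[OF V windows]
    by (intro norm_sum_diff_weighted_sum_le[OF V] a window_coverage_nonneg) (auto simp: V_def)
  finally show ?thesis by simp
qed

text \<open>Every window starting at one of \<open>n - k, \<dots>, n\<close> contains \<open>n\<close> and has at most \<open>L n + 1\<close>
  elements, so it gives \<open>n\<close> weight at least \<open>1 / (L n + 1)\<close>.\<close>
lemma window_coverage_ge:
  assumes incr: "\<forall>r n. T \<le> r \<longrightarrow> r \<le> n \<longrightarrow> L r \<le> L n \<and> L n - L r \<le> e * (n - r)"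
    and e: "e \<ge> 0" and k: "(1 + e) * real k \<le> L (real n)" "T \<le> real n - real k" "k < n"
    and "n \<le> R"
  shows "(real k + 1) / (L (real n) + 1) \<le> window_coverage L R n"
proof -
  have weight: "1 / (L (real n) + 1) \<le> 1 / real (card (window L r))"
    and covered: "n \<in> window L r" if r: "r \<in> {n - k..n}" for r
  proof -
    have nr: "real n - real r \<le> real k" and "T \<le> real r" "r \<le> n"
      using r k by auto
    then have "L (real r) \<le> L (real n)" "L (real n) - L (real r) \<le> e * (real n - real r)"
      using incr by auto
    moreover have "e * (real n - real r) \<le> e * real k"
      using nr e by (rule mult_left_mono)
    ultimately have "L (real r) \<le> L (real n)" "L (real n) - L (real r) \<le> e * real k"
      by auto
    then have Lr: "real n - real r \<le> L (real r)" "L (real r) \<le> L (real n)"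
      using k \<open>real n - real r \<le> real k\<close> by (auto simp: algebra_simps)
    then show "n \<in> window L r"
      using \<open>r \<le> n\<close> by (simp add: window_def)
    then have "card (window L r) > 0"
      using finite_window card_gt_0_iff by blast
    moreover have "real (card (window L r)) \<le> L (real n) + 1"
      using card_window_le[of L r] Lr \<open>r \<le> n\<close> by (smt (verit) of_nat_mono)
    ultimately show "1 / (L (real n) + 1) \<le> 1 / real (card (window L r))"
      by (intro divide_left_mono) auto
  qed
  have "(real k + 1) / (L (real n) + 1) = (\<Sum>r=n-k..n. 1 / (L (real n) + 1))"
    using k by (simp add: Suc_diff_le)
  also have "\<dots> \<le> (\<Sum>r=n-k..n. if n \<in> window L r then 1 / real (card (window L r)) else 0)"
    using weight covered by (intro sum_mono) auto
  also have "\<dots> \<le> window_coverage L R n"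
    unfolding window_coverage_def using k \<open>n \<le> R\<close> by (intro sum_mono2) auto
  finally show ?thesis .
qed

lemma window_coverage_ge_ratio:
  assumes incr: "\<forall>r n. T \<le> r \<longrightarrow> r \<le> n \<longrightarrow> L r \<le> L n \<and> L n - L r \<le> e * (n - r)"
    and e: "e \<ge> 0" and L_n: "L (real n) \<ge> 0" "2 * L (real n) < real n"
    and T: "2 * T \<le> real n" and "n \<le> R"
  shows "L (real n) / ((1 + e) * (L (real n) + 1)) \<le> window_coverage L R n"
proof -
  define x where "x = L (real n)"
  define k where "k = nat \<lfloor>x / (1 + e)\<rfloor>"
  have "x / (1 + e) \<ge> 0"
    using L_n e unfolding x_def by simp
  then have k_le: "real k \<le> x / (1 + e)" and k_gt: "x / (1 + e) < real k + 1"
    unfolding k_def by linarith+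
  moreover have "x / (1 + e) \<le> x"
    using L_n e unfolding x_def by (simp add: divide_le_eq mult_le_cancel_left1)
  ultimately have "real k \<le> x"
    by linarith
  have "(1 + e) * real k \<le> x"
    using k_le e by (simp add: field_simps)
  moreover have "T \<le> real n - real k" "k < n"
    using \<open>real k \<le> x\<close> L_n T unfolding x_def by linarith+
  ultimately have "(real k + 1) / (x + 1) \<le> window_coverage L R n"
    using incr e \<open>n \<le> R\<close> unfolding x_def by (intro window_coverage_ge) auto
  moreover have "x / (1 + e) / (x + 1) \<le> (real k + 1) / (x + 1)"
    using k_gt L_n unfolding x_def by (intro divide_right_mono) auto
  ultimately show ?thesis
    unfolding x_def divide_divide_eq_left by linarith
qed

lemma window_coverage_eventually_ge:
  assumes slow: "slowly_increasing L" and L_top: "filterlim L at_top at_top"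
    and L_sub: "((\<lambda>t. L t / t) \<longlongrightarrow> 0) at_top" and eps: "eps > 0"
  shows "\<exists>n0. \<forall>R n. n0 \<le> n \<longrightarrow> n \<le> R \<longrightarrow> 1 - eps \<le> window_coverage L R n"
proof -
  obtain T where incr: "\<forall>r n. T \<le> r \<longrightarrow> r \<le> n \<longrightarrow> L r \<le> L n \<and> L n - L r \<le> eps / 2 * (n - r)"
    using slow eps unfolding slowly_increasing_def by (meson half_gt_zero)
  have "eventually (\<lambda>t. L t \<ge> 2 / eps) at_top"
    using L_top by (simp add: filterlim_at_top)
  moreover have "eventually (\<lambda>t. L t / t < 1 / 2) at_top"
    using L_sub by (intro order_tendstoD) auto
  moreover have "eventually (\<lambda>t. t \<ge> 2 * max T 1) at_top"
    by (rule eventually_ge_at_top)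
  ultimately have "eventually (\<lambda>t. L t \<ge> 2 / eps \<and> 2 * L t < t \<and> 2 * T \<le> t) at_top"
    by eventually_elim (auto simp: field_simps)
  then obtain X where X: "\<And>t. t \<ge> X \<Longrightarrow> L t \<ge> 2 / eps \<and> 2 * L t < t \<and> 2 * T \<le> t"
    unfolding eventually_at_top_linorder by blast
  have "1 - eps \<le> window_coverage L R n" if n: "nat \<lceil>X\<rceil> \<le> n" "n \<le> R" for R n
  proof -
    define x where "x = L (real n)"
    have "real n \<ge> X"
      using n real_nat_ceiling_ge[of X] by (meson of_nat_mono order_trans)
    with X have x: "x \<ge> 2 / eps" "2 * x < real n" "2 * T \<le> real n"
      unfolding x_def by auto
    have x_pos: "x > 0"
      using x(1) eps by (smt (verit) divide_pos_pos)
    have "(1 - eps) * (1 + eps / 2) \<le> 1 - eps / 2"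
      using eps by (simp add: algebra_simps)
    then have "(1 - eps) * ((1 + eps / 2) * (x + 1)) \<le> (1 - eps / 2) * (x + 1)"
      using x_pos unfolding mult.assoc[symmetric] by (intro mult_right_mono) auto
    also have "\<dots> \<le> x"
      using x(1) eps by (simp add: field_simps)
    finally have "1 - eps \<le> x / ((1 + eps / 2) * (x + 1))"
      using eps x_pos by (simp add: le_divide_eq add_pos_pos)
    also have "\<dots> \<le> window_coverage L R n"
      using incr eps x_pos x n(2) unfolding x_def by (intro window_coverage_ge_ratio) auto
    finally show ?thesis .
  qed
  then show ?thesis by blast
qed

lemma window_coverage_deficit_small:
  assumes slow: "slowly_increasing L" and L_top: "filterlim L at_top at_top"
    and L_sub: "((\<lambda>t. L t / t) \<longlongrightarrow> 0) at_top" and eps: "eps > 0"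
  shows "eventually (\<lambda>R. (\<Sum>n=1..R. max (1 - window_coverage L R n) 0) \<le> eps * real R) sequentially"
proof -
  obtain n0 where n0: "\<And>R n. n0 \<le> n \<Longrightarrow> n \<le> R \<Longrightarrow> 1 - eps / 2 \<le> window_coverage L R n"
    using window_coverage_eventually_ge[OF slow L_top L_sub, of "eps / 2"] eps by auto
  have deficit: "(\<Sum>n=1..R. max (1 - window_coverage L R n) 0) \<le> real n0 + eps / 2 * real R" for R
  proof -
    have "(\<Sum>n=1..R. max (1 - window_coverage L R n) 0) \<le>
        (\<Sum>n=1..R. (if n < n0 then 1 else 0) + eps / 2)"
    proof (rule sum_mono)
      fix n assume "n \<in> {1..R}"
      then show "max (1 - window_coverage L R n) 0 \<le> (if n < n0 then 1 else 0) + eps / 2"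
        using n0[of n R] window_coverage_nonneg[of L R n] eps by (cases "n < n0") (auto simp: max_def)
    qed
    also have "\<dots> = real (card ({1..R} \<inter> {..<n0})) + eps / 2 * real R"
      by (simp add: sum.distrib sum.If_cases Int_def)
    also have "card ({1..R} \<inter> {..<n0}) \<le> n0"
      using card_mono[of "{..<n0}" "{1..R} \<inter> {..<n0}"] by auto
    finally show ?thesis by simp
  qed
  have "eventually (\<lambda>R. real n0 \<le> eps / 2 * real R) sequentially"
    using eventually_ge_at_top[of "nat \<lceil>2 * real n0 / eps\<rceil>"]
  proof eventually_elim
    case (elim R)
    then have "2 * real n0 / eps \<le> real R"
      by (meson real_nat_ceiling_ge of_nat_mono order_trans)
    with eps show ?case by (simp add: field_simps)
  qed
  then show ?thesis
  proof eventually_elim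
    case (elim R)
    with deficit[of R] show ?case by linarith
  qed
qed

lemma norm_avg_upto_le_avg_short_avgs:
  fixes A :: "nat \<Rightarrow> nat \<Rightarrow> 'a::real_normed_vector"
  assumes slow: "slowly_increasing L" and L_top: "filterlim L at_top at_top"
    and L_sub: "((\<lambda>t. L t / t) \<longlongrightarrow> 0) at_top"
    and A_bound: "\<And>R n. norm (A R n) \<le> 1" and e: "e > 0"
  shows "eventually (\<lambda>R. norm (avg_upto R (A R)) \<le>
    (1 / real R) * (\<Sum>r=1..R. norm (short_avg L r (A R))) + e) sequentially"
  using window_coverage_deficit_small[OF slow L_top L_sub half_gt_zero[OF e]]
    eventually_gt_at_top[of 0]
proof eventually_elim
  case (elim R)
  have "norm (avg_upto R (A R)) = norm (\<Sum>n=1..R. A R n) / real R"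
    by (simp add: avg_upto_def)
  also have "\<dots> \<le> ((\<Sum>r=1..R. norm (short_avg L r (A R))) + e * real R) / real R"
    using norm_sum_le_sum_short_avgs[of "A R" R L] A_bound elim
    by (intro divide_right_mono) auto
  also have "\<dots> = (1 / real R) * (\<Sum>r=1..R. norm (short_avg L r (A R))) + e"
    using elim by (simp add: field_simps)
  finally show ?case .
qed

lemma limsup_norm_avg_upto_le_limsup_avg_short_avgs:
  fixes A :: "nat \<Rightarrow> nat \<Rightarrow> 'a::real_normed_vector"
  assumes slow: "slowly_increasing L" and L_top: "filterlim L at_top at_top"
    and L_sub: "((\<lambda>t. L t / t) \<longlongrightarrow> 0) at_top"
    and A_bound: "\<And>R n. norm (A R n) \<le> 1"
  shows "limsup (\<lambda>R. ereal (norm (avg_upto R (A R)))) \<le>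
    limsup (\<lambda>R. ereal ((1 / real R) * (\<Sum>r=1..R. norm (short_avg L r (A R)))))"
proof (rule ereal_le_epsilon2)
  fix e :: real assume "e > 0"
  have "limsup (\<lambda>R. ereal (norm (avg_upto R (A R)))) \<le>
      limsup (\<lambda>R. ereal ((1 / real R) * (\<Sum>r=1..R. norm (short_avg L r (A R)))) + ereal e)"
    using norm_avg_upto_le_avg_short_avgs[OF slow L_top L_sub A_bound \<open>e > 0\<close>]
    by (intro Limsup_mono) (auto elim: eventually_mono)
  also have "\<dots> = limsup (\<lambda>R. ereal ((1 / real R) * (\<Sum>r=1..R. norm (short_avg L r (A R))))) + ereal e"
    by (rule Limsup_add_ereal_right) simp_all
  finally show "limsup (\<lambda>R. ereal (norm (avg_upto R (A R)))) \<le>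
      limsup (\<lambda>R. ereal ((1 / real R) * (\<Sum>r=1..R. norm (short_avg L r (A R))))) + ereal e" .
qed

theorem lemma3p3:
  fixes H :: "(real \<Rightarrow> real) set"
    and A :: "nat \<Rightarrow> nat \<Rightarrow> 'a::real_normed_vector"
    and L :: "real \<Rightarrow> real"
    and d :: nat and C :: real
  assumes H: "standing_hardy_field H"
    and d: "d > 0"
    and A_bound: "\<And>R n. norm (A R n) \<le> 1"
    and L_in: "L \<in> H"
    and L_pos: "eventually (\<lambda>t. L t > 0) at_top"
    and L_grow: "((\<lambda>t. 1 / L t) \<longlongrightarrow> 0) at_top"
    and L_sub: "((\<lambda>t. L t / t) \<longlongrightarrow> 0) at_top"
    and C: "C > 0"
    and hyp: "limsup (\<lambda>R. ereal ((1 / real R) *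
                 (\<Sum>r=1..R. norm (short_avg L r (A R)) ^ d))) \<le> ereal C"
  shows "limsup (\<lambda>R. ereal (norm (avg_upto R (A R)))) \<le> ereal (C powr (1 / real d))"
proof -
  have "hardy_field H"
    using H unfolding standing_hardy_field_def by blast
  moreover have L_top: "filterlim L at_top at_top"
    using filterlim_inverse_at_top[OF L_grow] L_pos by (simp add: eventually_mono)
  ultimately have slow: "slowly_increasing L"
    using L_in L_sub by (blast intro: hardy_sublinear_slowly_increasing)
  have "limsup (\<lambda>R. ereal (norm (avg_upto R (A R)))) \<le>
      limsup (\<lambda>R. ereal ((1 / real R) * (\<Sum>r=1..R. norm (short_avg L r (A R)))))"
    using slow L_top L_sub A_bound by (rule limsup_norm_avg_upto_le_limsup_avg_short_avgs)
  also have "\<dots> \<le> ereal (C powr (1 / real d))"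
    by (rule limsup_mean_le_root_limsup_mean_power[OF _ d C hyp]) simp
  finally show ?thesis .
qed

end
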